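(* Let $u,v$ be two words, and $a$ be a letter. Then, \begin{equation} uav = \sum_{u_1u_2=u}(-1)^{|u_2|}u_1 \sqcup\!\sqcup (a(\overline{u_2} \sqcup\!\sqcup v)). \end{equation}
   Context: Words are over a totally ordered alphabet (e.g. the positive integers), and identities are taken in the free $\mathbb{Z}$-module spanned by words. Here $\sqcup\!\sqcup$ denotes the (ordinary) shuffle product of words, extended bilinearly; juxtaposition denotes concatenation (so $a(w)$ means the letter $a$ concatenated in front of each word of $w$); the sum runs over all factorizations $u=u_1u_2$ of $u$ as a concatenation of two (possibly empty) words; $|u_2|$ is the length of $u_2$; and $\overline{u_2}$ denotes the reversal (mirror image) of the word $u_2$. For example, $1234 = 12\sqcup\!\sqcup 34 - 1\sqcup\!\sqcup 3(2\sqcup\!\sqcup 4)+3(21\sqcup\!\sqcup 4)$. *)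

theory Defs
  imports "HOL-Library.Poly_Mapping"
begin

text \<open>Elements of the free Z-module on words: finitely supported maps
  'a list =>0 int. A word w is the basis element frag_of w.\<close>

definition prepend :: "'a \<Rightarrow> ('a list \<Rightarrow>\<^sub>0 int) \<Rightarrow> ('a list \<Rightarrow>\<^sub>0 int)" where
  "prepend a p = frag_extend (\<lambda>w. frag_of (a # w)) p"

fun shuffle_word :: "'a list \<Rightarrow> 'a list \<Rightarrow> ('a list \<Rightarrow>\<^sub>0 int)" where
  "shuffle_word [] v = frag_of v"
| "shuffle_word u [] = frag_of u"
| "shuffle_word (a # u) (b # v) =
     prepend a (shuffle_word u (b # v)) + prepend b (shuffle_word (a # u) v)"

definition shuffle :: "('a list \<Rightarrow>\<^sub>0 int) \<Rightarrow> ('a list \<Rightarrow>\<^sub>0 int) \<Rightarrow> ('a list \<Rightarrow>\<^sub>0 int)" where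
  "shuffle p q = frag_extend (\<lambda>u. frag_extend (\<lambda>v. shuffle_word u v) q) p"

end

theory Submission
  imports Defs
begin

text \<open>Write \<open>S(w) = (-1)^|w| rev w\<close>. Splitting off the first letter \<open>b\<close> of \<open>u = b u'\<close>
  with the shuffle recursion turns the right-hand side for \<open>u\<close> into \<open>b\<close> times the
  right-hand side for \<open>u'\<close> plus \<open>a\<close> times \<open>\<Sum> u\<^sub>1 \<sqinter> (S(u\<^sub>2) \<sqinter> v)\<close> over all factorizations
  \<open>u = u\<^sub>1u\<^sub>2\<close>, where \<open>\<sqinter>\<close> is the shuffle product. This last sum, the convolution of the identity
  with the antipode \<open>S\<close>, shuffled with \<open>v\<close>, vanishes for nonempty \<open>u\<close>: expanding each triple
  shuffle by its first letter, the terms where that letter is the last letter of \<open>u\<^sub>2\<close>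
  cancel the terms where it is the first letter of \<open>u\<^sub>1\<close>, leaving smaller instances.\<close>

lemma prepend_0 [simp]: "prepend a 0 = 0"
  by (simp add: prepend_def)

lemma prepend_frag_of [simp]: "prepend a (frag_of w) = frag_of (a # w)"
  by (simp add: prepend_def)

lemma prepend_add: "prepend a (p + q) = prepend a p + prepend a q"
  by (simp add: prepend_def frag_extend_add)

lemma prepend_diff: "prepend a (p - q) = prepend a p - prepend a q"
  by (simp add: prepend_def frag_extend_diff)

lemma prepend_cmul: "prepend a (frag_cmul k p) = frag_cmul k (prepend a p)"
  by (simp add: prepend_def frag_extend_cmul)

lemma prepend_sum: "finite I \<Longrightarrow> prepend a (\<Sum>i\<in>I. g i) = (\<Sum>i\<in>I. prepend a (g i))"
  by (simp add: prepend_def frag_extend_sum o_def)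

lemma shuffle_word_Nil_right [simp]: "shuffle_word u [] = frag_of u"
  by (cases u) auto

lemma frag_extend_shuffle_word_Nil [simp]: "frag_extend (shuffle_word []) q = q"
proof -
  have "shuffle_word [] = frag_of"
    by (rule ext) simp
  then show ?thesis
    by (simp add: \<open>shuffle_word [] = frag_of\<close> frag_expansion[symmetric])
qed

lemma shuffle_frag_of_left: "shuffle (frag_of x) q = frag_extend (shuffle_word x) q"
  by (simp add: shuffle_def)

lemma shuffle_word_unfold:
  assumes "x \<noteq> [] \<or> y \<noteq> []"
  shows "shuffle_word x y =
    (if x = [] then 0 else prepend (hd x) (shuffle_word (tl x) y)) +
    (if y = [] then 0 else prepend (hd y) (shuffle_word x (tl y)))"
  using assms by (cases x; cases y) auto

lemma frag_extend_shuffle_word_prepend: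
  assumes "x \<noteq> []"
  shows "frag_extend (shuffle_word x) (prepend c r) =
    prepend (hd x) (frag_extend (shuffle_word (tl x)) (prepend c r)) +
    prepend c (frag_extend (shuffle_word x) r)"
  using subset_UNIV
proof (induction r rule: frag_induction)
  case (one w)
  then show ?case
    using assms by (cases x) auto
next
  case (diff p q)
  then show ?case
    by (simp add: prepend_diff frag_extend_diff algebra_simps)
qed auto

definition shuffle_word3 :: "'a list \<Rightarrow> 'a list \<Rightarrow> 'a list \<Rightarrow> ('a list \<Rightarrow>\<^sub>0 int)" where
  "shuffle_word3 x y v = frag_extend (shuffle_word x) (shuffle_word y v)"

lemma shuffle_word3_unfold:
  assumes "x \<noteq> [] \<or> y \<noteq> [] \<or> v \<noteq> []"
  shows "shuffle_word3 x y v =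
    (if x = [] then 0 else prepend (hd x) (shuffle_word3 (tl x) y v)) +
    (if y = [] then 0 else prepend (hd y) (shuffle_word3 x (tl y) v)) +
    (if v = [] then 0 else prepend (hd v) (shuffle_word3 x y (tl v)))"
proof (cases "y = [] \<and> v = []")
  case True
  then show ?thesis
    using assms by (cases x) (auto simp: shuffle_word3_def)
next
  case False
  then have yv: "y \<noteq> [] \<or> v \<noteq> []"
    by simp
  show ?thesis
  proof (cases "x = []")
    case True
    then show ?thesis
      using yv shuffle_word_unfold[of y v] by (simp add: shuffle_word3_def)
  next
    case False
    then show ?thesis
      using yv unfolding shuffle_word3_def shuffle_word_unfold[of y v, OF yv]
      by (auto simp: frag_extend_add frag_extend_shuffle_word_prepend prepend_add algebra_simps)
  qed
qed

text \<open>This is \<open>(\<Sum> u\<^sub>1 \<sqinter> S(u\<^sub>2)) \<sqinter> v\<close> with the associativity of the shuffle built in.\<close>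

definition antipode_convolution :: "'a list \<Rightarrow> 'a list \<Rightarrow> ('a list \<Rightarrow>\<^sub>0 int)" where
  "antipode_convolution u v = (\<Sum>i\<in>{0..length u}.
     frag_cmul ((-1) ^ (length u - i)) (shuffle_word3 (take i u) (rev (drop i u)) v))"

lemma antipode_convolution_first_letters:
  assumes "u \<noteq> []"
  shows "(\<Sum>i\<in>{0..length u}. frag_cmul ((-1) ^ (length u - i))
      (if take i u = [] then 0
       else prepend (hd (take i u)) (shuffle_word3 (tl (take i u)) (rev (drop i u)) v)))
   = prepend (hd u) (antipode_convolution (tl u) v)"
  using assms
proof (cases u)
  case (Cons b u')
  then show ?thesis
    by (simp only: length_Cons sum.atLeast0_atMost_Suc_shift)
      (simp add: antipode_convolution_def prepend_sum prepend_cmul)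
qed simp

lemma antipode_convolution_last_letters:
  assumes "u \<noteq> []"
  shows "(\<Sum>i\<in>{0..length u}. frag_cmul ((-1) ^ (length u - i))
      (if rev (drop i u) = [] then 0
       else prepend (hd (rev (drop i u))) (shuffle_word3 (take i u) (tl (rev (drop i u))) v)))
   = - prepend (last u) (antipode_convolution (butlast u) v)"
  using assms
proof (cases u rule: rev_exhaust)
  case (snoc w c)
  have "frag_cmul ((-1) ^ (Suc (length w) - i))
        (if rev (drop i (w @ [c])) = [] then 0
         else prepend (hd (rev (drop i (w @ [c]))))
                (shuffle_word3 (take i (w @ [c])) (tl (rev (drop i (w @ [c])))) v))
      = - prepend c (frag_cmul ((-1) ^ (length w - i)) (shuffle_word3 (take i w) (rev (drop i w)) v))"
    if "i \<le> length w" for i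
  proof -
    from that have "Suc (length w) - i = Suc (length w - i)" by simp
    with that show ?thesis
      by (simp add: prepend_cmul)
  qed
  then show ?thesis
    unfolding snoc
    by (simp add: atLeast0_atMost_Suc antipode_convolution_def prepend_sum sum_negf)
qed simp

lemma antipode_convolution_unfold:
  assumes "u \<noteq> []"
  shows "antipode_convolution u v =
    prepend (hd u) (antipode_convolution (tl u) v) - prepend (last u) (antipode_convolution (butlast u) v) +
    (if v = [] then 0 else prepend (hd v) (antipode_convolution u (tl v)))"
proof -
  have "take i u \<noteq> [] \<or> rev (drop i u) \<noteq> [] \<or> v \<noteq> []" for i
    using assms by (metis append_take_drop_id rev_is_Nil_conv self_append_conv2)
  then have "antipode_convolution u v =
      (\<Sum>i\<in>{0..length u}. frag_cmul ((-1) ^ (length u - i))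
        (if take i u = [] then 0
         else prepend (hd (take i u)) (shuffle_word3 (tl (take i u)) (rev (drop i u)) v))) +
      (\<Sum>i\<in>{0..length u}. frag_cmul ((-1) ^ (length u - i))
        (if rev (drop i u) = [] then 0
         else prepend (hd (rev (drop i u))) (shuffle_word3 (take i u) (tl (rev (drop i u))) v))) +
      (\<Sum>i\<in>{0..length u}. frag_cmul ((-1) ^ (length u - i))
        (if v = [] then 0 else prepend (hd v) (shuffle_word3 (take i u) (rev (drop i u)) (tl v))))"
    unfolding antipode_convolution_def sum.distrib[symmetric]
    by (intro sum.cong refl) (simp only: shuffle_word3_unfold frag_cmul_distrib2)
  also have "\<dots> = prepend (hd u) (antipode_convolution (tl u) v)
      - prepend (last u) (antipode_convolution (butlast u) v) +
      (if v = [] then 0 else prepend (hd v) (antipode_convolution u (tl v)))"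
    unfolding antipode_convolution_first_letters[OF assms] antipode_convolution_last_letters[OF assms]
    by (simp add: antipode_convolution_def prepend_sum prepend_cmul)
  finally show ?thesis .
qed

lemma antipode_convolution_eq_0: "u \<noteq> [] \<Longrightarrow> antipode_convolution u v = 0"
proof (induction "length u + length v" arbitrary: u v rule: less_induct)
  case less
  have "tl u = [] \<or> antipode_convolution (tl u) v = 0"
    using less by (cases u) auto
  moreover have "butlast u = [] \<or> antipode_convolution (butlast u) v = 0"
    using less by (cases u rule: rev_exhaust) auto
  moreover have "tl u = [] \<longleftrightarrow> butlast u = []"
    by (cases u) auto
  moreover have "hd u = last u" if "tl u = []"
    using that less(2) by (cases u) auto
  moreover have "v = [] \<or> antipode_convolution u (tl v) = 0"
    using less by (cases v) auto
  ultimately show ?case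
    using antipode_convolution_unfold[OF less(2), of v] by auto
qed

definition letter_expansion :: "'a list \<Rightarrow> 'a \<Rightarrow> 'a list \<Rightarrow> ('a list \<Rightarrow>\<^sub>0 int)" where
  "letter_expansion u a v = (\<Sum>i\<in>{0..length u}.
     frag_cmul ((-1) ^ (length u - i))
       (shuffle (frag_of (take i u)) (prepend a (shuffle (frag_of (rev (drop i u))) (frag_of v)))))"

lemma letter_expansion_Cons:
  "letter_expansion (b # u) a v =
     prepend b (letter_expansion u a v) + prepend a (antipode_convolution (b # u) v)"
proof -
  define X where "X i = shuffle_word (rev (drop i u)) v" for i
  have "letter_expansion (b # u) a v =
      frag_cmul ((-1) ^ Suc (length u)) (prepend a (shuffle_word (rev (b # u)) v)) +
      (\<Sum>i\<in>{0..length u}. frag_cmul ((-1) ^ (length u - i))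
        (frag_extend (shuffle_word (b # take i u)) (prepend a (X i))))"
    unfolding letter_expansion_def
    by (simp only: length_Cons sum.atLeast0_atMost_Suc_shift) (simp add: shuffle_frag_of_left X_def)
  also have "\<dots> = prepend b (letter_expansion u a v) + prepend a (antipode_convolution (b # u) v)"
    unfolding letter_expansion_def antipode_convolution_def
    by (simp only: length_Cons sum.atLeast0_atMost_Suc_shift)
      (simp add: frag_extend_shuffle_word_prepend prepend_sum prepend_cmul prepend_add
        frag_cmul_distrib2 sum.distrib shuffle_frag_of_left shuffle_word3_def X_def algebra_simps)
  finally show ?thesis .
qed

lemma frag_of_eq_letter_expansion: "frag_of (u @ a # v) = letter_expansion u a v"
proof (induction u)
  case Nil
  then show ?case
    by (simp add: letter_expansion_def shuffle_frag_of_left)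
next
  case (Cons b u)
  then show ?case
    by (simp add: letter_expansion_Cons antipode_convolution_eq_0 flip: Cons.IH)
qed

theorem mainTheorem7:
  fixes u v :: "'a::linorder list" and a :: 'a
  shows "frag_of (u @ a # v) =
    (\<Sum>i\<in>{0..length u}.
       frag_cmul ((-1) ^ (length u - i))
         (shuffle (frag_of (take i u))
            (prepend a (shuffle (frag_of (rev (drop i u))) (frag_of v)))))"
  using frag_of_eq_letter_expansion unfolding letter_expansion_def .

end
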